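(* Let $k\ge1$ be an integer and let $F$ be a distribution function on $\mathbb{R}$ with $\int x^{2k}dF(x)<\infty$. For $n\ge1$ let $\hat t^{(k)}_n$ be the polynomial Pitman estimator of degree $k$ of $\theta$ from a sample of size $n$ from $F(x-\theta)$. Then for all $n\ge1$, $$(n+1)\,\mathrm{var}(\hat t^{(k)}_{n+1})\ \le\ n\,\mathrm{var}(\hat t^{(k)}_n).$$
   Context: A sample of size $n$ from $F(x-\theta)$ ($\theta\in\mathbb{R}$ unknown) is $x_1,\ldots,x_n$ i.i.d. with $x_i-\theta\sim F$. Let $M_k$ be the space of polynomials of degree at most $k$ in the residuals $x_1-\bar x,\ldots,x_n-\bar x$, and $\hat E(\cdot\mid M_k)$ the orthogonal projection onto $M_k$ in the Hilbert space of polynomials of degree at most $k$ in $x_1,\ldots,x_n$ with inner product $(q_1,q_2)=E_0(q_1q_2)$, $E_0$ being expectation under $\theta=0$. The polynomial Pitman estimator of degree $k$ is $\hat t^{(k)}_n=\bar x-\hat E(\bar x\mid M_k)$, the minimum variance equivariant polynomial estimator of degree $k$ (equivariant: $t(x_1+c,\ldots,x_n+c)=t(x_1,\ldots,x_n)+c$). *)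

theory Defs
  imports "HOL-Probability.Probability"
begin

text \<open>Samples of size n are functions x :: nat \<Rightarrow> real, of which only x 0, ..., x (n-1) are used.\<close>

definition monomial :: "nat \<Rightarrow> (nat \<Rightarrow> nat) \<Rightarrow> (nat \<Rightarrow> real) \<Rightarrow> real" where
  "monomial n a x = (\<Prod>i<n. x i ^ a i)"

definition poly_fun :: "nat \<Rightarrow> nat \<Rightarrow> ((nat \<Rightarrow> real) \<Rightarrow> real) set" where
  "poly_fun n k = {p. \<exists>A c. finite A \<and> (\<forall>a\<in>A. (\<Sum>i<n. a i) \<le> k) \<and>
       p = (\<lambda>x. \<Sum>a\<in>A. c a * monomial n a x)}"

definition xbar :: "nat \<Rightarrow> (nat \<Rightarrow> real) \<Rightarrow> real" where
  "xbar n x = (\<Sum>i<n. x i) / real n"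

definition resid_poly :: "nat \<Rightarrow> nat \<Rightarrow> ((nat \<Rightarrow> real) \<Rightarrow> real) set" where
  "resid_poly n k = {(\<lambda>x. P (\<lambda>i. x i - xbar n x)) | P. P \<in> poly_fun n k}"

definition sample :: "nat \<Rightarrow> real measure \<Rightarrow> real \<Rightarrow> (nat \<Rightarrow> real) measure" where
  "sample n F \<theta> = PiM {..<n} (\<lambda>_. distr F borel (\<lambda>x. x + \<theta>))"

definition is_proj :: "nat \<Rightarrow> nat \<Rightarrow> real measure \<Rightarrow> ((nat \<Rightarrow> real) \<Rightarrow> real) \<Rightarrow> bool" where
  "is_proj n k F q \<longleftrightarrow> q \<in> resid_poly n k \<and>
     (\<forall>p\<in>resid_poly n k. (LINT x|sample n F 0. (xbar n x - q x) * p x) = 0)"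

definition pitman :: "nat \<Rightarrow> ((nat \<Rightarrow> real) \<Rightarrow> real) \<Rightarrow> (nat \<Rightarrow> real) \<Rightarrow> real" where
  "pitman n q = (\<lambda>x. xbar n x - q x)"

definition var :: "'a measure \<Rightarrow> ('a \<Rightarrow> real) \<Rightarrow> real" where
  "var M X = (LINT x|M. (X x - (LINT y|M. X y))^2)"

end

theory Submission
  imports Defs
begin

(* Average the Pitman estimator of degree k of an n-sample over the n+1 leave-one-out subsamples
   of an (n+1)-sample.  This average is again of the form xbar - r with r a polynomial of degree k
   in the residuals of the (n+1)-sample, so by optimality of the projection its variance bounds
   that of the Pitman estimator of the (n+1)-sample.  Its variance is at most n/(n+1) times that of
   the n-sample estimator by the Efron-Stein (Hoeffding) bound: if the centred variables Y_i do not
   depend on x_i, then Var(Y_1 + ... + Y_m) <= (m - 1) (Var Y_1 + ... + Var Y_m).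
   All estimators involved are shift-equivariant, so variances may be computed at theta = 0, where
   every polynomial of degree at most 2k is integrable.  Integrating out a single coordinate maps
   polynomials of degree at most k to themselves, and these maps are commuting self-adjoint
   projections, which is all the Efron-Stein argument needs. *)

section \<open>Polynomial functions\<close>

lemma monomial_mult: "monomial n a x * monomial n b x = monomial n (\<lambda>i. a i + b i) x"
  unfolding monomial_def by (simp add: power_add prod.distrib)

lemma monomial_zero [simp]: "monomial n (\<lambda>_. 0) x = 1"
  unfolding monomial_def by simp

lemma monomial_fun_upd:
  assumes "i < n"
  shows "monomial n a (x(i := y)) = y ^ a i * monomial n (a(i := 0)) x"
proof -
  have "monomial n a (x(i := y)) = y ^ a i * (\<Prod>j\<in>{..<n} - {i}. x j ^ a j)"
    unfolding monomial_def using assms by (subst prod.remove[of _ i]) (auto intro!: prod.cong)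
  also have "(\<Prod>j\<in>{..<n} - {i}. x j ^ a j) = monomial n (a(i := 0)) x"
    unfolding monomial_def using assms by (subst (2) prod.remove[of _ i]) (auto intro!: prod.cong)
  finally show ?thesis .
qed

lemma poly_funI:
  assumes "finite A" "\<And>a. a \<in> A \<Longrightarrow> (\<Sum>i<n. a i) \<le> d"
  shows "(\<lambda>x. \<Sum>a\<in>A. c a * monomial n a x) \<in> poly_fun n d"
  using assms unfolding poly_fun_def by blast

lemma poly_funE:
  assumes "f \<in> poly_fun n d"
  obtains A c where "finite A" "\<And>a. a \<in> A \<Longrightarrow> (\<Sum>i<n. a i) \<le> d"
    "\<And>a i. a \<in> A \<Longrightarrow> i < n \<Longrightarrow> a i \<le> d" "f = (\<lambda>x. \<Sum>a\<in>A. c a * monomial n a x)"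
proof -
  obtain A c where A: "finite A" "\<forall>a\<in>A. (\<Sum>i<n. a i) \<le> d"
    "f = (\<lambda>x. \<Sum>a\<in>A. c a * monomial n a x)"
    using assms unfolding poly_fun_def by blast
  have le: "a i \<le> d" if "a \<in> A" "i < n" for a i
    using member_le_sum[of i "{..<n}" a] A(2) that by fastforce
  show thesis by (rule that[of A c]) (use A le in auto)
qed

lemma poly_fun_monomial:
  assumes "(\<Sum>i<n. a i) \<le> d"
  shows "(\<lambda>x. c * monomial n a x) \<in> poly_fun n d"
  using poly_funI[where A="{a}" and c="\<lambda>_. c"] assms by simp

lemma poly_fun_const: "(\<lambda>x. c) \<in> poly_fun n d"
  using poly_fun_monomial[where a="\<lambda>_. 0" and c=c] by simp

lemma poly_fun_mono: "d \<le> d' \<Longrightarrow> f \<in> poly_fun n d \<Longrightarrow> f \<in> poly_fun n d'"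
  unfolding poly_fun_def by fastforce

lemma poly_fun_add:
  assumes "f \<in> poly_fun n d" "g \<in> poly_fun n d"
  shows "(\<lambda>x. f x + g x) \<in> poly_fun n d"
proof -
  obtain A c where A: "finite A" "\<And>a. a \<in> A \<Longrightarrow> (\<Sum>i<n. a i) \<le> d"
    "f = (\<lambda>x. \<Sum>a\<in>A. c a * monomial n a x)" using assms(1) by (rule poly_funE) blast
  obtain B c' where B: "finite B" "\<And>a. a \<in> B \<Longrightarrow> (\<Sum>i<n. a i) \<le> d"
    "g = (\<lambda>x. \<Sum>a\<in>B. c' a * monomial n a x)" using assms(2) by (rule poly_funE) blast
  define e where "e a = (if a \<in> A then c a else 0) + (if a \<in> B then c' a else 0)" for a
  have "(\<Sum>a\<in>A\<union>B. e a * monomial n a x) = f x + g x" for x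
  proof -
    have "(\<Sum>a\<in>A\<union>B. e a * monomial n a x) =
        (\<Sum>a\<in>A\<union>B. if a \<in> A then c a * monomial n a x else 0) +
        (\<Sum>a\<in>A\<union>B. if a \<in> B then c' a * monomial n a x else 0)"
      unfolding sum.distrib[symmetric] by (intro sum.cong) (auto simp: e_def algebra_simps)
    also have "\<dots> = f x + g x"
      using A B by (simp add: sum.If_cases Int_absorb1 Int_absorb2)
    finally show ?thesis .
  qed
  moreover have "(\<lambda>x. \<Sum>a\<in>A\<union>B. e a * monomial n a x) \<in> poly_fun n d"
    using A B by (intro poly_funI) auto
  ultimately show ?thesis by simp
qed

lemma poly_fun_scale:
  assumes "f \<in> poly_fun n d"
  shows "(\<lambda>x. r * f x) \<in> poly_fun n d"
proof -
  obtain A c where A: "finite A" "\<And>a. a \<in> A \<Longrightarrow> (\<Sum>i<n. a i) \<le> d"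
    "f = (\<lambda>x. \<Sum>a\<in>A. c a * monomial n a x)" using assms by (rule poly_funE) blast
  have "(\<lambda>x. \<Sum>a\<in>A. (r * c a) * monomial n a x) \<in> poly_fun n d"
    using A by (intro poly_funI) auto
  then show ?thesis using A by (simp add: sum_distrib_left mult.assoc)
qed

lemma poly_fun_diff:
  assumes "f \<in> poly_fun n d" "g \<in> poly_fun n d"
  shows "(\<lambda>x. f x - g x) \<in> poly_fun n d"
  using poly_fun_add[OF assms(1) poly_fun_scale[OF assms(2), of "-1"]] by simp

lemma poly_fun_sum:
  assumes "finite S" "\<And>s. s \<in> S \<Longrightarrow> f s \<in> poly_fun n d"
  shows "(\<lambda>x. \<Sum>s\<in>S. f s x) \<in> poly_fun n d"
  using assms
proof (induction S rule: finite_induct)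
  case empty
  then show ?case using poly_fun_const[of 0 n d] by simp
next
  case (insert s S)
  then show ?case using poly_fun_add[of "f s" n d "\<lambda>x. \<Sum>s\<in>S. f s x"] by simp
qed

lemma poly_fun_mult:
  assumes "f \<in> poly_fun n d1" "g \<in> poly_fun n d2"
  shows "(\<lambda>x. f x * g x) \<in> poly_fun n (d1 + d2)"
proof -
  obtain A c where A: "finite A" "\<And>a. a \<in> A \<Longrightarrow> (\<Sum>i<n. a i) \<le> d1"
    "f = (\<lambda>x. \<Sum>a\<in>A. c a * monomial n a x)" using assms(1) by (rule poly_funE) blast
  obtain B c' where B: "finite B" "\<And>a. a \<in> B \<Longrightarrow> (\<Sum>i<n. a i) \<le> d2"
    "g = (\<lambda>x. \<Sum>a\<in>B. c' a * monomial n a x)" using assms(2) by (rule poly_funE) blast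
  have "f x * g x = (\<Sum>a\<in>A. \<Sum>b\<in>B. (c a * c' b) * monomial n (\<lambda>i. a i + b i) x)" for x
    unfolding A(3) B(3) sum_product
    by (intro sum.cong refl) (simp add: monomial_mult[symmetric] ac_simps)
  moreover have "(\<lambda>x. \<Sum>a\<in>A. \<Sum>b\<in>B. (c a * c' b) * monomial n (\<lambda>i. a i + b i) x)
      \<in> poly_fun n (d1 + d2)"
    using A B by (intro poly_fun_sum poly_fun_monomial) (auto simp: sum.distrib intro: add_mono)
  ultimately show ?thesis by simp
qed

lemma poly_fun_coord:
  assumes "i < n" "1 \<le> d"
  shows "(\<lambda>x. x i) \<in> poly_fun n d"
proof -
  have "(\<lambda>x. 1 * monomial n (\<lambda>j. if j = i then 1 else 0) x) \<in> poly_fun n d"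
    using assms by (intro poly_fun_monomial) simp
  moreover have "monomial n (\<lambda>j. if j = i then 1 else 0) x = x i" for x
    unfolding monomial_def using assms
    by (simp add: if_distrib[of "\<lambda>e. x _ ^ e"] prod.delta cong: if_cong)
  ultimately show ?thesis by simp
qed

lemma poly_fun_power:
  assumes "f \<in> poly_fun n d"
  shows "(\<lambda>x. f x ^ m) \<in> poly_fun n (m * d)"
proof (induction m)
  case 0
  then show ?case using poly_fun_const[of 1 n 0] by simp
next
  case (Suc m)
  then show ?case using poly_fun_mult[OF assms Suc] by (simp add: add.commute)
qed

lemma poly_fun_prod:
  assumes "finite S" "\<And>s. s \<in> S \<Longrightarrow> f s \<in> poly_fun n (e s)"
  shows "(\<lambda>x. \<Prod>s\<in>S. f s x) \<in> poly_fun n (\<Sum>s\<in>S. e s)"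
  using assms
proof (induction S rule: finite_induct)
  case empty
  then show ?case using poly_fun_const[of 1 n 0] by simp
next
  case (insert s S)
  then show ?case using poly_fun_mult[of "f s" n "e s" "\<lambda>x. \<Prod>s\<in>S. f s x"] by simp
qed

lemma poly_fun_compose_linear:
  assumes "P \<in> poly_fun n d" "\<And>j. j < n \<Longrightarrow> L j \<in> poly_fun m 1"
  shows "(\<lambda>x. P (\<lambda>j. L j x)) \<in> poly_fun m d"
proof -
  obtain A c where A: "finite A" "\<And>a. a \<in> A \<Longrightarrow> (\<Sum>i<n. a i) \<le> d"
    "P = (\<lambda>x. \<Sum>a\<in>A. c a * monomial n a x)" using assms(1) by (rule poly_funE) blast
  have "(\<lambda>x. \<Prod>j<n. L j x ^ a j) \<in> poly_fun m d" if "a \<in> A" for a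
    using poly_fun_prod[of "{..<n}" "\<lambda>j x. L j x ^ a j" m a] poly_fun_power[OF assms(2)]
      poly_fun_mono[OF A(2)[OF that]] by simp
  then have "(\<lambda>x. \<Sum>a\<in>A. c a * (\<Prod>j<n. L j x ^ a j)) \<in> poly_fun m d"
    using A(1) by (intro poly_fun_sum poly_fun_scale)
  then show ?thesis using A(3) by (simp add: monomial_def)
qed

lemma poly_fun_cong:
  assumes "P \<in> poly_fun n d" "\<And>i. i < n \<Longrightarrow> x i = y i"
  shows "P x = P y"
proof -
  obtain A c where "P = (\<lambda>x. \<Sum>a\<in>A. c a * monomial n a x)" using assms(1) by (rule poly_funE) blast
  moreover have "monomial n a x = monomial n a y" for a
    unfolding monomial_def using assms(2) by (intro prod.cong) auto
  ultimately show ?thesis by simp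
qed

lemma xbar_poly_fun: "1 \<le> d \<Longrightarrow> xbar n \<in> poly_fun n d"
  using poly_fun_scale[OF poly_fun_sum[of "{..<n}" "\<lambda>i x. x i", OF _ poly_fun_coord],
      of n d "1 / real n"]
  by (simp add: xbar_def[abs_def])

lemma resid_poly_subset: "resid_poly n d \<subseteq> poly_fun n d"
proof
  fix q assume "q \<in> resid_poly n d"
  then obtain P where "P \<in> poly_fun n d" "q = (\<lambda>x. P (\<lambda>i. x i - xbar n x))"
    unfolding resid_poly_def by blast
  then show "q \<in> poly_fun n d"
    using poly_fun_compose_linear[of P n d "\<lambda>i x. x i - xbar n x" n]
    by (simp add: poly_fun_diff poly_fun_coord xbar_poly_fun)
qed

lemma resid_poly_const: "(\<lambda>x. c) \<in> resid_poly n d"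
  unfolding resid_poly_def using poly_fun_const[of c n d] by force

lemma resid_poly_diff:
  assumes "r \<in> resid_poly n d" "s \<in> resid_poly n d"
  shows "(\<lambda>x. r x - s x) \<in> resid_poly n d"
proof -
  obtain P where P: "P \<in> poly_fun n d" "r = (\<lambda>x. P (\<lambda>i. x i - xbar n x))"
    using assms(1) unfolding resid_poly_def by blast
  obtain Q where Q: "Q \<in> poly_fun n d" "s = (\<lambda>x. Q (\<lambda>i. x i - xbar n x))"
    using assms(2) unfolding resid_poly_def by blast
  have "(\<lambda>z. P z - Q z) \<in> poly_fun n d" by (rule poly_fun_diff[OF P(1) Q(1)])
  then show ?thesis
    unfolding resid_poly_def P(2) Q(2) by (intro CollectI exI[of _ "\<lambda>z. P z - Q z"]) auto
qed

section \<open>Integration of polynomials over the null sample\<close>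

locale finite_moments = real_distribution F for F :: "real measure" +
  fixes k :: nat
  assumes integrable_power_2k: "integrable F (\<lambda>x. x ^ (2 * k))"
begin

definition Pi_F :: "nat \<Rightarrow> (nat \<Rightarrow> real) measure" where
  "Pi_F m = PiM {..<m} (\<lambda>_. F)"

definition moment :: "nat \<Rightarrow> real" where
  "moment j = (\<integral>y. y ^ j \<partial>F)"

lemma moment_0 [simp]: "moment 0 = 1"
  using prob_space by (simp add: moment_def)

lemma integrable_power:
  assumes "j \<le> 2 * k"
  shows "integrable F (\<lambda>x. x ^ j)"
proof (rule Bochner_Integration.integrable_bound)
  show "integrable F (\<lambda>x. 1 + x ^ (2 * k))"
    using integrable_power_2k by simp
  have "\<bar>x\<bar> ^ j \<le> 1 + \<bar>x\<bar> ^ (2 * k)" for x :: real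
  proof (cases "\<bar>x\<bar> \<le> 1")
    case True
    then have "\<bar>x\<bar> ^ j \<le> 1" by (simp add: power_le_one)
    then show ?thesis using zero_le_power[of "\<bar>x\<bar>" "2 * k"] by linarith
  next
    case False
    then have "\<bar>x\<bar> ^ j \<le> \<bar>x\<bar> ^ (2 * k)" by (intro power_increasing assms) simp
    then show ?thesis by simp
  qed
  moreover have "x ^ (2 * k) = \<bar>x\<bar> ^ (2 * k)" for x :: real
    by (simp add: power_mult)
  ultimately show "AE x in F. norm (x ^ j) \<le> norm (1 + x ^ (2 * k))"
    by (simp add: power_abs)
qed simp

lemma prob_space_Pi_F: "prob_space (Pi_F m)"
  unfolding Pi_F_def by (intro prob_space_PiM prob_space_axioms)

lemma product_sigma_finite_F: "product_sigma_finite (\<lambda>_::nat. F)"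
  unfolding product_sigma_finite_def by (simp add: sigma_finite_measure_axioms)

lemma integrable_monomial:
  assumes "\<And>i. i < m \<Longrightarrow> a i \<le> 2 * k"
  shows "integrable (Pi_F m) (monomial m a)"
  using product_sigma_finite.product_integrable_prod[OF product_sigma_finite_F,
      of "{..<m}" "\<lambda>i v. v ^ a i"] assms integrable_power
  by (simp add: Pi_F_def monomial_def[abs_def])

lemma integral_monomial_sum:
  assumes "finite S" "\<And>s j. s \<in> S \<Longrightarrow> j < m \<Longrightarrow> e s j \<le> 2 * k"
  shows "(\<integral>x. (\<Sum>s\<in>S. c s * monomial m (e s) x) \<partial>Pi_F m) = (\<Sum>s\<in>S. c s * (\<Prod>j<m. moment (e s j)))"
proof -
  have "integral\<^sup>L (Pi_F m) (monomial m (e s)) = (\<Prod>j<m. moment (e s j))" if "s \<in> S" for s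
    using product_sigma_finite.product_integral_prod[OF product_sigma_finite_F,
        of "{..<m}" "\<lambda>i v. v ^ e s i"] assms(2)[OF that] integrable_power
    by (simp add: Pi_F_def monomial_def[abs_def] moment_def)
  then show ?thesis
    using assms by (subst Bochner_Integration.integral_sum) (auto intro: integrable_monomial)
qed

lemma integrable_poly_fun:
  assumes "f \<in> poly_fun m (2 * k)"
  shows "integrable (Pi_F m) f"
proof -
  obtain A c where A: "finite A" "\<And>a i. a \<in> A \<Longrightarrow> i < m \<Longrightarrow> a i \<le> 2 * k"
    "f = (\<lambda>x. \<Sum>a\<in>A. c a * monomial m a x)" using assms by (rule poly_funE) blast
  then show ?thesis by (simp add: integrable_monomial)
qed

lemma integrable_poly_fun_mult:
  assumes "f \<in> poly_fun m k" "g \<in> poly_fun m k"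
  shows "integrable (Pi_F m) (\<lambda>x. f x * g x)"
  using poly_fun_mult[OF assms] by (intro integrable_poly_fun) (simp add: mult_2)

lemma poly_fun_double_degree: "f \<in> poly_fun m k \<Longrightarrow> f \<in> poly_fun m (2 * k)"
  by (rule poly_fun_mono[rotated]) auto

section \<open>Integrating out one coordinate\<close>

definition integrate_out :: "nat \<Rightarrow> ((nat \<Rightarrow> real) \<Rightarrow> real) \<Rightarrow> (nat \<Rightarrow> real) \<Rightarrow> real" where
  "integrate_out i f x = (\<integral>y. f (x(i := y)) \<partial>F)"

lemma integrate_out_monomial_sum:
  assumes "finite S" "\<And>s j. s \<in> S \<Longrightarrow> j < m \<Longrightarrow> e s j \<le> 2 * k" "i < m"
  shows "integrate_out i (\<lambda>x. \<Sum>s\<in>S. c s * monomial m (e s) x) =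
         (\<lambda>x. \<Sum>s\<in>S. (c s * moment (e s i)) * monomial m ((e s)(i := 0)) x)"
proof
  fix x
  have "integrate_out i (\<lambda>x. \<Sum>s\<in>S. c s * monomial m (e s) x) x =
      (\<integral>y. (\<Sum>s\<in>S. (c s * monomial m ((e s)(i := 0)) x) * y ^ e s i) \<partial>F)"
    unfolding integrate_out_def using assms(3)
    by (intro Bochner_Integration.integral_cong refl sum.cong) (auto simp: monomial_fun_upd)
  also have "\<dots> = (\<Sum>s\<in>S. (c s * moment (e s i)) * monomial m ((e s)(i := 0)) x)"
    using assms
    by (subst Bochner_Integration.integral_sum)
      (auto intro!: integrable_power simp: moment_def ac_simps)
  finally show "integrate_out i (\<lambda>x. \<Sum>s\<in>S. c s * monomial m (e s) x) x =
      (\<Sum>s\<in>S. (c s * moment (e s i)) * monomial m ((e s)(i := 0)) x)" .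
qed

lemma integrate_out_poly_fun:
  assumes "f \<in> poly_fun m d" "d \<le> 2 * k" "i < m"
  shows "integrate_out i f \<in> poly_fun m d"
proof -
  obtain A c where A: "finite A" "\<And>a. a \<in> A \<Longrightarrow> (\<Sum>j<m. a j) \<le> d"
    "\<And>a j. a \<in> A \<Longrightarrow> j < m \<Longrightarrow> a j \<le> d" "f = (\<lambda>x. \<Sum>a\<in>A. c a * monomial m a x)"
    using assms(1) by (rule poly_funE) blast
  have "integrate_out i f = (\<lambda>x. \<Sum>a\<in>A. (c a * moment (a i)) * monomial m (a(i := 0)) x)"
    unfolding A(4) using A(3) assms(2,3)
    by (intro integrate_out_monomial_sum A(1)) (auto intro: order.trans)
  moreover have "(\<Sum>j<m. (a(i := 0)) j) \<le> d" if "a \<in> A" for a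
    using sum_mono[of "{..<m}" "a(i := 0)" a] A(2)[OF that] by fastforce
  ultimately show ?thesis
    using A(1) by (auto intro!: poly_fun_sum poly_fun_monomial)
qed

lemma integrate_out_commute:
  assumes "f \<in> poly_fun m (2 * k)" "i < m" "j < m"
  shows "integrate_out i (integrate_out j f) = integrate_out j (integrate_out i f)"
proof (cases "i = j")
  case False
  obtain A c where A: "finite A" "\<And>a l. a \<in> A \<Longrightarrow> l < m \<Longrightarrow> a l \<le> 2 * k"
    "f = (\<lambda>x. \<Sum>a\<in>A. c a * monomial m a x)" using assms(1) by (rule poly_funE) blast
  have twice: "integrate_out l (integrate_out l' f) =
      (\<lambda>x. \<Sum>a\<in>A. c a * (moment (a l) * moment (a l')) * monomial m (a(l := 0, l' := 0)) x)"
    if "l < m" "l' < m" "l \<noteq> l'" for l l'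
  proof -
    have inner: "integrate_out l' f =
        (\<lambda>x. \<Sum>a\<in>A. (c a * moment (a l')) * monomial m (a(l' := 0)) x)"
      unfolding A(3) by (rule integrate_out_monomial_sum[where e="\<lambda>a. a"]) (use A that in auto)
    have "integrate_out l (integrate_out l' f) = (\<lambda>x. \<Sum>a\<in>A.
        (c a * moment (a l') * moment ((a(l' := 0)) l)) * monomial m ((a(l' := 0))(l := 0)) x)"
      unfolding inner
      by (rule integrate_out_monomial_sum[where e="\<lambda>a. a(l' := 0)"]) (use A that in auto)
    moreover have "a(l' := 0, l := 0) = a(l := 0, l' := 0)" for a :: "nat \<Rightarrow> nat"
      using not_sym[OF that(3)] by (rule fun_upd_twist)
    ultimately show ?thesis using that(3) by (simp add: ac_simps)
  qed
  have "a(i := 0, j := 0) = a(j := 0, i := 0)" for a :: "nat \<Rightarrow> nat"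
    using False by (rule fun_upd_twist)
  then show ?thesis
    unfolding twice[OF assms(2,3) False] twice[OF assms(3,2) not_sym[OF False]]
    by (simp add: mult.commute)
qed simp

lemma integrate_out_fun_upd [simp]: "integrate_out i f (x(i := z)) = integrate_out i f x"
  unfolding integrate_out_def by simp

lemma integrate_out_eq_self:
  assumes "\<And>x z. g (x(i := z)) = g x"
  shows "integrate_out i g = g"
  using prob_space unfolding integrate_out_def assms by (simp add: fun_eq_iff)

lemma integrate_out_idem: "integrate_out i (integrate_out i f) = integrate_out i f"
  by (rule integrate_out_eq_self) simp

lemma integrable_fun_upd:
  assumes "f \<in> poly_fun m (2 * k)" "j < m"
  shows "integrable F (\<lambda>y. f (x(j := y)))"
proof -
  obtain A c where A: "finite A" "\<And>a i. a \<in> A \<Longrightarrow> i < m \<Longrightarrow> a i \<le> 2 * k"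
    "f = (\<lambda>x. \<Sum>a\<in>A. c a * monomial m a x)" using assms(1) by (rule poly_funE) blast
  have "integrable F (\<lambda>y. \<Sum>a\<in>A. (c a * monomial m (a(j := 0)) x) * y ^ a j)"
    using A(2) assms(2)
    by (intro Bochner_Integration.integrable_sum integrable_mult_right integrable_power)
  then show ?thesis unfolding A(3) using assms(2) by (simp add: monomial_fun_upd ac_simps)
qed

lemma integrate_out_diff:
  assumes "f \<in> poly_fun m (2 * k)" "g \<in> poly_fun m (2 * k)" "j < m"
  shows "integrate_out j (\<lambda>x. f x - g x) = (\<lambda>x. integrate_out j f x - integrate_out j g x)"
  unfolding integrate_out_def
  using integrable_fun_upd[OF assms(1,3)] integrable_fun_upd[OF assms(2,3)]
  by (simp add: fun_eq_iff)

lemma integrate_out_mult_invariant: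
  assumes "\<And>x z. u (x(i := z)) = u x"
  shows "integrate_out i (\<lambda>x. u x * g x) x = u x * integrate_out i g x"
  unfolding integrate_out_def assms by simp

lemma integral_integrate_out:
  assumes "f \<in> poly_fun m (2 * k)" "i < m"
  shows "integral\<^sup>L (Pi_F m) (integrate_out i f) = integral\<^sup>L (Pi_F m) f"
proof -
  obtain A c where A: "finite A" "\<And>a j. a \<in> A \<Longrightarrow> j < m \<Longrightarrow> a j \<le> 2 * k"
    "f = (\<lambda>x. \<Sum>a\<in>A. c a * monomial m a x)" using assms(1) by (rule poly_funE) blast
  have moments: "moment (a i) * (\<Prod>j<m. moment ((a(i := 0)) j)) = (\<Prod>j<m. moment (a j))" for a
  proof -
    have "(\<Prod>j<m. moment ((a(i := 0)) j)) = (\<Prod>j\<in>{..<m} - {i}. moment (a j))"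
      using assms(2) by (subst prod.remove[of _ i]) (auto intro!: prod.cong)
    then show ?thesis using assms(2) by (simp add: prod.remove[of _ i])
  qed
  have "integral\<^sup>L (Pi_F m) (integrate_out i f) =
      (\<integral>x. (\<Sum>a\<in>A. (c a * moment (a i)) * monomial m (a(i := 0)) x) \<partial>Pi_F m)"
    unfolding A(3) using A(2) assms(2) by (subst integrate_out_monomial_sum[OF A(1)]) auto
  also have "\<dots> = (\<Sum>a\<in>A. (c a * moment (a i)) * (\<Prod>j<m. moment ((a(i := 0)) j)))"
    by (rule integral_monomial_sum) (use A in auto)
  also have "\<dots> = (\<Sum>a\<in>A. c a * (\<Prod>j<m. moment (a j)))"
    by (simp only: mult.assoc moments)
  also have "\<dots> = integral\<^sup>L (Pi_F m) f"
    using A by (simp add: integral_monomial_sum)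
  finally show ?thesis .
qed

section \<open>The Efron--Stein inequality for polynomials\<close>

definition inner_L2 :: "nat \<Rightarrow> ((nat \<Rightarrow> real) \<Rightarrow> real) \<Rightarrow> ((nat \<Rightarrow> real) \<Rightarrow> real) \<Rightarrow> real" where
  "inner_L2 m f g = (\<integral>x. f x * g x \<partial>Pi_F m)"

lemma inner_L2_commute: "inner_L2 m f g = inner_L2 m g f"
  unfolding inner_L2_def by (simp add: mult.commute)

lemma inner_L2_self_nonneg: "0 \<le> inner_L2 m f f"
  unfolding inner_L2_def by simp

lemma inner_L2_scale_left: "inner_L2 m (\<lambda>x. c * f x) g = c * inner_L2 m f g"
  unfolding inner_L2_def by (simp add: mult.assoc)

lemma inner_L2_scale_right: "inner_L2 m f (\<lambda>x. c * g x) = c * inner_L2 m f g"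
  unfolding inner_L2_def by (simp add: ac_simps)

lemma inner_L2_add_self:
  assumes "u \<in> poly_fun m k" "v \<in> poly_fun m k"
  shows "inner_L2 m (\<lambda>x. u x + v x) (\<lambda>x. u x + v x) =
    inner_L2 m u u + 2 * inner_L2 m u v + inner_L2 m v v"
proof -
  have "(\<lambda>x. (u x + v x) * (u x + v x)) = (\<lambda>x. u x * u x + 2 * (u x * v x) + v x * v x)"
    by (simp add: fun_eq_iff algebra_simps)
  then show ?thesis
    unfolding inner_L2_def
    using integrable_poly_fun_mult[OF assms(1,1)] integrable_poly_fun_mult[OF assms]
      integrable_poly_fun_mult[OF assms(2,2)]
    by (simp add: Bochner_Integration.integral_add)
qed

lemma inner_L2_sum_right:
  assumes "finite I" "\<And>i. i \<in> I \<Longrightarrow> Y i \<in> poly_fun m k" "h \<in> poly_fun m k"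
  shows "inner_L2 m h (\<lambda>x. \<Sum>i\<in>I. Y i x) = (\<Sum>i\<in>I. inner_L2 m h (Y i))"
  unfolding inner_L2_def sum_distrib_left
  using assms by (intro Bochner_Integration.integral_sum integrable_poly_fun_mult)

lemma integrate_out_poly_fun_k: "f \<in> poly_fun m k \<Longrightarrow> i < m \<Longrightarrow> integrate_out i f \<in> poly_fun m k"
  by (rule integrate_out_poly_fun) auto

lemma inner_L2_integrate_out:
  assumes "f \<in> poly_fun m k" "g \<in> poly_fun m k" "i < m"
  shows "inner_L2 m (integrate_out i f) g = inner_L2 m (integrate_out i f) (integrate_out i g)"
proof -
  have "(\<lambda>x. integrate_out i f x * g x) \<in> poly_fun m (2 * k)"
    using poly_fun_mult[OF integrate_out_poly_fun_k[OF assms(1,3)] assms(2)] by (simp add: mult_2)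
  then have "inner_L2 m (integrate_out i f) g =
      integral\<^sup>L (Pi_F m) (integrate_out i (\<lambda>x. integrate_out i f x * g x))"
    unfolding inner_L2_def using assms(3) by (simp add: integral_integrate_out)
  also have "integrate_out i (\<lambda>x. integrate_out i f x * g x) =
      (\<lambda>x. integrate_out i f x * integrate_out i g x)"
    by (rule ext, rule integrate_out_mult_invariant) simp
  finally show ?thesis unfolding inner_L2_def .
qed

lemma inner_L2_integrate_out_swap:
  assumes "f \<in> poly_fun m k" "g \<in> poly_fun m k" "i < m"
  shows "inner_L2 m (integrate_out i f) g = inner_L2 m f (integrate_out i g)"
  using inner_L2_integrate_out[OF assms] inner_L2_integrate_out[OF assms(2,1,3)]
  by (simp add: inner_L2_commute)

definition fluctuation :: "nat \<Rightarrow> ((nat \<Rightarrow> real) \<Rightarrow> real) \<Rightarrow> (nat \<Rightarrow> real) \<Rightarrow> real" where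
  "fluctuation i f = (\<lambda>x. f x - integrate_out i f x)"

lemma fluctuation_poly_fun: "f \<in> poly_fun m k \<Longrightarrow> i < m \<Longrightarrow> fluctuation i f \<in> poly_fun m k"
  unfolding fluctuation_def by (intro poly_fun_diff integrate_out_poly_fun_k)

lemma integrate_out_fluctuation:
  assumes "f \<in> poly_fun m k" "i < m"
  shows "integrate_out i (fluctuation i f) = (\<lambda>x. 0)"
  unfolding fluctuation_def
  using integrate_out_diff[OF poly_fun_double_degree[OF assms(1)]
      poly_fun_double_degree[OF integrate_out_poly_fun_k[OF assms]] assms(2)]
  by (simp add: integrate_out_idem)

lemma inner_L2_pythagoras:
  assumes "u \<in> poly_fun m k" "i < m"
  shows "inner_L2 m u u = inner_L2 m (integrate_out i u) (integrate_out i u) +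
    inner_L2 m (fluctuation i u) (fluctuation i u)"
proof -
  have orth: "inner_L2 m (integrate_out i u) (fluctuation i u) = 0"
    using inner_L2_integrate_out[OF assms(1) fluctuation_poly_fun[OF assms] assms(2)]
    by (simp add: integrate_out_fluctuation[OF assms] inner_L2_def)
  have "u = (\<lambda>x. integrate_out i u x + fluctuation i u x)"
    by (simp add: fluctuation_def)
  then have "inner_L2 m u u = inner_L2 m (\<lambda>x. integrate_out i u x + fluctuation i u x)
      (\<lambda>x. integrate_out i u x + fluctuation i u x)"
    by simp
  then show ?thesis
    using orth
      inner_L2_add_self[OF integrate_out_poly_fun_k[OF assms] fluctuation_poly_fun[OF assms]]
    by simp
qed

lemma inner_L2_integrate_out_le:
  assumes "u \<in> poly_fun m k" "i < m"
  shows "inner_L2 m (integrate_out i u) (integrate_out i u) \<le> inner_L2 m u u"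
  using inner_L2_pythagoras[OF assms] inner_L2_self_nonneg[of m "fluctuation i u"] by linarith

lemma fluctuation_integrate_out:
  assumes "f \<in> poly_fun m k" "i < m" "j < m"
  shows "fluctuation i (integrate_out j f) = integrate_out j (fluctuation i f)"
  unfolding fluctuation_def
  using integrate_out_diff[OF poly_fun_double_degree[OF assms(1)]
      poly_fun_double_degree[OF integrate_out_poly_fun_k[OF assms(1,2)]] assms(3)]
    integrate_out_commute[OF poly_fun_double_degree[OF assms(1)] assms(2,3)]
  by simp

lemma integrate_out_invariant_const:
  assumes "w \<in> poly_fun m d" "\<And>i. i < m \<Longrightarrow> integrate_out i w = w"
  shows "w x = w (\<lambda>_. 0)"
proof -
  have "w x = w (\<lambda>j. if j < l then 0 else x j)" if "l \<le> m" for l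
    using that
  proof (induction l)
    case (Suc l)
    have "w x = w ((\<lambda>j. if j < l then 0 else x j)(l := 0))"
      using Suc integrate_out_fun_upd[of l w] assms(2)[of l] by simp
    also have "(\<lambda>j. if j < l then 0 else x j)(l := 0) = (\<lambda>j. if j < Suc l then 0 else x j)"
      by (auto simp: fun_eq_iff)
    finally show ?case .
  qed simp
  then have "w x = w (\<lambda>j. if j < m then 0 else x j)" by simp
  also have "\<dots> = w (\<lambda>_. 0)" by (rule poly_fun_cong[OF assms(1)]) simp
  finally show ?thesis .
qed

text \<open>The orthogonality hypothesis of efron_stein is its induction invariant: integrating out one
  more coordinate preserves it.\<close>

lemma inner_L2_integrate_out_orthogonal:
  assumes "Z \<in> poly_fun m k" "j < m" "J \<subseteq> {..<m}"
    and orth: "\<And>w. w \<in> poly_fun m k \<Longrightarrow> (\<forall>i\<in>insert j J. integrate_out i w = w) \<Longrightarrow>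
      inner_L2 m Z w = 0"
    and "w \<in> poly_fun m k" "\<forall>i\<in>J. integrate_out i w = w"
  shows "inner_L2 m (integrate_out j Z) w = 0"
proof -
  have "integrate_out i (integrate_out j w) = integrate_out j w" if "i \<in> insert j J" for i
  proof (cases "i = j")
    case False
    then have "i \<in> J" "i < m" using that assms(3) by auto
    then show ?thesis
      using integrate_out_commute[OF poly_fun_double_degree[OF assms(5)] _ assms(2)] assms(6)
      by simp
  qed (simp add: integrate_out_idem)
  then have "inner_L2 m Z (integrate_out j w) = 0"
    using orth integrate_out_poly_fun_k[OF assms(5,2)] by blast
  then show ?thesis using inner_L2_integrate_out_swap[OF assms(1,5,2)] by simp
qed

lemma efron_stein:
  assumes "finite J" "J \<subseteq> {..<m}" "Z \<in> poly_fun m k"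
    and "\<And>w. w \<in> poly_fun m k \<Longrightarrow> (\<forall>i\<in>J. integrate_out i w = w) \<Longrightarrow> inner_L2 m Z w = 0"
  shows "inner_L2 m Z Z \<le> (\<Sum>i\<in>J. inner_L2 m (fluctuation i Z) (fluctuation i Z))"
  using assms
proof (induction J arbitrary: Z rule: finite_induct)
  case (insert j J)
  have j: "j < m" and J: "J \<subseteq> {..<m}" using insert.prems by auto
  define Z' where "Z' = integrate_out j Z"
  have Z': "Z' \<in> poly_fun m k"
    unfolding Z'_def using insert.prems(2) j by (rule integrate_out_poly_fun_k)
  have "inner_L2 m Z' w = 0" if "w \<in> poly_fun m k" "\<forall>i\<in>J. integrate_out i w = w" for w
    unfolding Z'_def
    by (rule inner_L2_integrate_out_orthogonal[OF insert.prems(2) j J insert.prems(3) that])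
  then have "inner_L2 m Z' Z' \<le> (\<Sum>i\<in>J. inner_L2 m (fluctuation i Z') (fluctuation i Z'))"
    using insert.IH[OF J Z'] by blast
  also have "\<dots> \<le> (\<Sum>i\<in>J. inner_L2 m (fluctuation i Z) (fluctuation i Z))"
  proof (rule sum_mono)
    fix i assume "i \<in> J"
    then have i: "i < m" using J by auto
    show "inner_L2 m (fluctuation i Z') (fluctuation i Z') \<le>
        inner_L2 m (fluctuation i Z) (fluctuation i Z)"
      unfolding Z'_def fluctuation_integrate_out[OF insert.prems(2) i j]
      by (intro inner_L2_integrate_out_le fluctuation_poly_fun insert.prems(2) i j)
  qed
  finally show ?case
    using inner_L2_pythagoras[OF insert.prems(2) j] insert.hyps unfolding Z'_def by simp
qed simp

lemma inner_L2_twice_le: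
  assumes "u \<in> poly_fun m k" "v \<in> poly_fun m k" "0 < t"
  shows "2 * inner_L2 m u v \<le> inner_L2 m u u / t + t * inner_L2 m v v"
proof -
  have "0 \<le> inner_L2 m (\<lambda>x. u x + (- t) * v x) (\<lambda>x. u x + (- t) * v x)"
    by (rule inner_L2_self_nonneg)
  also have "\<dots> = inner_L2 m u u - 2 * t * inner_L2 m u v + t * t * inner_L2 m v v"
    unfolding inner_L2_add_self[OF assms(1) poly_fun_scale[OF assms(2)]]
      inner_L2_scale_left inner_L2_scale_right
    by (simp add: algebra_simps)
  also have "\<dots> = (inner_L2 m u u / t + t * inner_L2 m v v - 2 * inner_L2 m u v) * t"
    using assms(3) by (simp add: field_simps)
  finally show ?thesis using assms(3) by (simp add: zero_le_mult_iff)
qed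

text \<open>If Y does not depend on x_i, only the part of Z that survives integrating out x_i
  correlates with Y.\<close>

lemma inner_L2_invariant_le:
  assumes "Z \<in> poly_fun m k" "Y \<in> poly_fun m k" "i < m" "integrate_out i Y = Y" "0 < t"
  shows "2 * inner_L2 m Z Y \<le>
    (inner_L2 m Z Z - inner_L2 m (fluctuation i Z) (fluctuation i Z)) / t + t * inner_L2 m Y Y"
proof -
  have "inner_L2 m Z Y = inner_L2 m (integrate_out i Z) Y"
    using inner_L2_integrate_out_swap[OF assms(1-3)] assms(4) by simp
  then show ?thesis
    using inner_L2_twice_le[OF integrate_out_poly_fun_k[OF assms(1,3)] assms(2,5)]
      inner_L2_pythagoras[OF assms(1,3)] by simp
qed

lemma inner_L2_orthogonal_invariant:
  assumes "integral\<^sup>L (Pi_F m) Z = 0" "w \<in> poly_fun m k" "\<And>i. i < m \<Longrightarrow> integrate_out i w = w"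
  shows "inner_L2 m Z w = 0"
proof -
  have "inner_L2 m Z w = (\<integral>x. Z x * w (\<lambda>_. 0) \<partial>Pi_F m)"
    unfolding inner_L2_def using integrate_out_invariant_const[OF assms(2,3)] by metis
  then show ?thesis using assms(1) by simp
qed

text \<open>Hoeffding's bound.  Each Y i correlates with the sum Z only through integrate_out i Z, so
  weighted AM-GM with weight m - 1 followed by Efron--Stein bounds the variance of Z.\<close>

lemma inner_L2_sum_le:
  assumes "2 \<le> m" and Y: "\<And>i. i < m \<Longrightarrow> Y i \<in> poly_fun m k"
    and invariant: "\<And>i. i < m \<Longrightarrow> integrate_out i (Y i) = Y i"
    and centred: "\<And>i. i < m \<Longrightarrow> integral\<^sup>L (Pi_F m) (Y i) = 0"
  shows "inner_L2 m (\<lambda>x. \<Sum>i<m. Y i x) (\<lambda>x. \<Sum>i<m. Y i x) \<le>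
    real (m - 1) * (\<Sum>i<m. inner_L2 m (Y i) (Y i))"
proof -
  define Z where "Z = (\<lambda>x. \<Sum>i<m. Y i x)"
  define t where "t = real (m - 1)"
  define S where "S = (\<Sum>i<m. inner_L2 m (fluctuation i Z) (fluctuation i Z))"
  have Z: "Z \<in> poly_fun m k" unfolding Z_def using Y by (intro poly_fun_sum) auto
  have "integral\<^sup>L (Pi_F m) Z = 0"
    unfolding Z_def using Y centred
    by (subst Bochner_Integration.integral_sum)
      (auto intro: integrable_poly_fun poly_fun_double_degree)
  then have ES: "inner_L2 m Z Z \<le> S"
    unfolding S_def using Z by (intro efron_stein inner_L2_orthogonal_invariant) auto
  have t: "0 < t" "real m = t + 1" using assms(1) unfolding t_def by auto
  have "inner_L2 m Z Z = (\<Sum>i<m. inner_L2 m Z (Y i))"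
    by (subst (2) Z_def) (rule inner_L2_sum_right; use Y Z in auto)
  then have "2 * inner_L2 m Z Z = (\<Sum>i<m. 2 * inner_L2 m Z (Y i))"
    by (simp add: sum_distrib_left)
  also have "\<dots> \<le> (\<Sum>i<m. (inner_L2 m Z Z - inner_L2 m (fluctuation i Z) (fluctuation i Z)) / t +
      t * inner_L2 m (Y i) (Y i))"
    using Z Y invariant t(1) by (intro sum_mono inner_L2_invariant_le) auto
  also have "\<dots> = (real m * inner_L2 m Z Z - S) / t + t * (\<Sum>i<m. inner_L2 m (Y i) (Y i))"
    unfolding S_def
    by (simp add: sum.distrib sum_divide_distrib[symmetric] sum_subtractf sum_distrib_left)
  also have "\<dots> \<le>
      (real m * inner_L2 m Z Z - inner_L2 m Z Z) / t + t * (\<Sum>i<m. inner_L2 m (Y i) (Y i))"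
    using ES t(1) by (simp add: divide_right_mono)
  also have "\<dots> = inner_L2 m Z Z + t * (\<Sum>i<m. inner_L2 m (Y i) (Y i))"
    using t by (simp add: field_simps)
  finally show ?thesis unfolding Z_def t_def by simp
qed

section \<open>Shifted samples and leave-one-out subsamples\<close>

lemma sample_zero: "sample m F 0 = Pi_F m"
  using distr_id2[of borel F] by (simp add: sample_def Pi_F_def)

lemma measurable_shift_coords: "(\<lambda>x. \<lambda>i\<in>{..<m}. x i + \<theta>) \<in> measurable (Pi_F m) (Pi_F m)"
  unfolding Pi_F_def by measurable

lemma integral_sample:
  assumes "g \<in> poly_fun m (2 * k)"
  shows "integral\<^sup>L (sample m F \<theta>) g = (\<integral>x. g (\<lambda>i. x i + \<theta>) \<partial>Pi_F m)"
proof -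
  have "distr F borel (\<lambda>x. x + \<theta>) = distr F F (\<lambda>x. x + \<theta>)"
    by (rule distr_cong) auto
  moreover have "compose {..<m} (\<lambda>x. x + \<theta>) = (\<lambda>x. \<lambda>i\<in>{..<m}. x i + \<theta>)"
    by (rule ext) (simp add: compose_def)
  ultimately have "sample m F \<theta> = distr (Pi_F m) (Pi_F m) (\<lambda>x. \<lambda>i\<in>{..<m}. x i + \<theta>)"
    using distr_PiM_finite_prob_space'[of "{..<m}" "\<lambda>_. F" "\<lambda>_. F" "\<lambda>x. x + \<theta>"]
      prob_space_axioms
    by (simp add: sample_def Pi_F_def)
  then have "integral\<^sup>L (sample m F \<theta>) g = (\<integral>x. g (\<lambda>i\<in>{..<m}. x i + \<theta>) \<partial>Pi_F m)"
    using integral_distr[OF measurable_shift_coords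
        borel_measurable_integrable[OF integrable_poly_fun[OF assms]]]
    by simp
  also have "\<dots> = (\<integral>x. g (\<lambda>i. x i + \<theta>) \<partial>Pi_F m)"
    by (intro Bochner_Integration.integral_cong refl poly_fun_cong[OF assms]) simp
  finally show ?thesis .
qed

text \<open>The j-th coordinate of the subsample with the i-th observation left out.\<close>

definition skip :: "nat \<Rightarrow> nat \<Rightarrow> nat" where
  "skip i j = (if j < i then j else Suc j)"

lemma skip_less: "j < n \<Longrightarrow> skip i j < Suc n"
  unfolding skip_def by auto

lemma skip_neq: "skip i j \<noteq> i"
  unfolding skip_def by auto

lemma inj_skip: "inj (skip i)"
  unfolding skip_def inj_def by auto

lemma image_skip:
  assumes "i < Suc n"
  shows "skip i ` {..<n} = {..<Suc n} - {i}"
proof (intro set_eqI iffI)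
  fix l assume l: "l \<in> {..<Suc n} - {i}"
  show "l \<in> skip i ` {..<n}"
  proof (cases "l < i")
    case True
    then show ?thesis using assms by (intro image_eqI[of _ _ l]) (auto simp: skip_def)
  next
    case False
    then show ?thesis using l by (intro image_eqI[of _ _ "l - 1"]) (auto simp: skip_def)
  qed
qed (auto simp: skip_less skip_neq)

lemma sum_skip:
  fixes x :: "nat \<Rightarrow> 'a::ab_group_add"
  assumes "i < Suc n"
  shows "(\<Sum>j<n. x (skip i j)) = (\<Sum>l<Suc n. x l) - x i"
proof -
  have "(\<Sum>j<n. x (skip i j)) = (\<Sum>l\<in>{..<Suc n} - {i}. x l)"
    using sum.reindex[where h="skip i" and A="{..<n}" and g=x]
      inj_on_subset[OF inj_skip[of i], of "{..<n}"]
      image_skip[OF assms] by simp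
  also have "\<dots> = (\<Sum>l<Suc n. x l) - x i"
    using sum.remove[of "{..<Suc n}" i x] assms by simp
  finally show ?thesis .
qed

lemma integral_skip:
  assumes "g \<in> poly_fun n (2 * k)"
  shows "integral\<^sup>L (Pi_F n) g = (\<integral>x. g (\<lambda>j. x (skip i j)) \<partial>Pi_F (Suc n))"
proof -
  have law: "distr (Pi_F (Suc n)) (Pi_F n) (\<lambda>x. \<lambda>j\<in>{..<n}. x (skip i j)) = Pi_F n"
    using distr_PiM_reindex[of "{..<Suc n}" "\<lambda>_. F" "skip i" "{..<n}"] prob_space_axioms
      inj_on_subset[OF inj_skip] skip_less
    by (auto simp: Pi_F_def)
  have "(\<lambda>x. \<lambda>j\<in>{..<n}. x (skip i j)) \<in> measurable (Pi_F (Suc n)) (Pi_F n)"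
    unfolding Pi_F_def
    by (intro measurable_restrict measurable_component_singleton) (simp add: skip_less)
  then have "integral\<^sup>L (Pi_F n) g = (\<integral>x. g (\<lambda>j\<in>{..<n}. x (skip i j)) \<partial>Pi_F (Suc n))"
    using integral_distr borel_measurable_integrable[OF integrable_poly_fun[OF assms]]
    by (metis law)
  also have "\<dots> = (\<integral>x. g (\<lambda>j. x (skip i j)) \<partial>Pi_F (Suc n))"
    by (intro Bochner_Integration.integral_cong refl poly_fun_cong[OF assms]) simp
  finally show ?thesis .
qed

lemma xbar_skip:
  assumes "1 \<le> n" "i < Suc n"
  shows "xbar n (\<lambda>j. x (skip i j)) = xbar (Suc n) x - (1 / real n) * (x i - xbar (Suc n) x)"
proof -
  define S where "S = (\<Sum>l<Suc n. x l)"
  have "real n \<noteq> 0" "real (Suc n) \<noteq> 0" using assms(1) by auto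
  then have "(S - x i) / real n = S / real (Suc n) - (1 / real n) * (x i - S / real (Suc n))"
    by (simp add: divide_simps del: of_nat_Suc) (simp add: algebra_simps)
  then show ?thesis unfolding xbar_def sum_skip[OF assms(2)] S_def[symmetric] .
qed

section \<open>The Pitman estimator\<close>

lemma is_proj_iff:
  "is_proj m k F q \<longleftrightarrow>
    q \<in> resid_poly m k \<and> (\<forall>p\<in>resid_poly m k. inner_L2 m (pitman m q) p = 0)"
  unfolding is_proj_def sample_zero inner_L2_def pitman_def ..

lemma pitman_poly_fun: "is_proj m k F q \<Longrightarrow> 1 \<le> k \<Longrightarrow> pitman m q \<in> poly_fun m k"
  unfolding is_proj_iff pitman_def
  using resid_poly_subset by (blast intro: poly_fun_diff xbar_poly_fun)

lemma integral_pitman: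
  assumes "is_proj m k F q"
  shows "integral\<^sup>L (Pi_F m) (pitman m q) = 0"
proof -
  have "inner_L2 m (pitman m q) (\<lambda>x. 1) = 0"
    using assms resid_poly_const[of 1 m k] unfolding is_proj_iff by blast
  then show ?thesis by (simp add: inner_L2_def)
qed

lemma pitman_optimal:
  assumes "is_proj m k F q" "1 \<le> k" "r \<in> resid_poly m k"
  shows "inner_L2 m (pitman m q) (pitman m q) \<le>
    inner_L2 m (\<lambda>x. xbar m x - r x) (\<lambda>x. xbar m x - r x)"
proof -
  define u where "u = (\<lambda>x. q x - r x)"
  have u: "u \<in> resid_poly m k"
    unfolding u_def using assms(1,3) by (simp add: is_proj_iff resid_poly_diff)
  have "(\<lambda>x. xbar m x - r x) = (\<lambda>x. pitman m q x + u x)"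
    by (simp add: pitman_def u_def)
  then have "inner_L2 m (\<lambda>x. xbar m x - r x) (\<lambda>x. xbar m x - r x) =
      inner_L2 m (pitman m q) (pitman m q) + inner_L2 m u u"
    using inner_L2_add_self[OF pitman_poly_fun[OF assms(1,2)] subsetD[OF resid_poly_subset u]]
      assms(1) u by (simp add: is_proj_iff)
  then show ?thesis using inner_L2_self_nonneg[of m u] by simp
qed

lemma pitman_shift:
  assumes "q \<in> resid_poly m k" "1 \<le> m"
  shows "pitman m q (\<lambda>i. x i + \<theta>) = pitman m q x + \<theta>"
proof -
  have "xbar m (\<lambda>i. x i + \<theta>) = xbar m x + \<theta>"
    using assms(2) by (simp add: xbar_def sum.distrib field_simps)
  then show ?thesis
    using assms(1) by (auto simp: resid_poly_def pitman_def)
qed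

lemma var_pitman:
  assumes "is_proj m k F q" "1 \<le> k" "1 \<le> m"
  shows "var (sample m F \<theta>) (pitman m q) = inner_L2 m (pitman m q) (pitman m q)"
proof -
  define t where "t = pitman m q"
  have t: "t \<in> poly_fun m k" and t0: "integral\<^sup>L (Pi_F m) t = 0"
    unfolding t_def using assms(1,2) by (auto intro: pitman_poly_fun integral_pitman)
  have shift: "t (\<lambda>i. x i + \<theta>) = t x + \<theta>" for x
    unfolding t_def using assms(1,3) by (simp add: is_proj_iff pitman_shift)
  interpret Pi: prob_space "Pi_F m" by (rule prob_space_Pi_F)
  have "integral\<^sup>L (sample m F \<theta>) t = \<theta>"
    using integral_sample[OF poly_fun_double_degree[OF t]]
      integrable_poly_fun[OF poly_fun_double_degree[OF t]]
    by (simp add: shift t0 Pi.prob_space)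
  moreover have "(\<lambda>x. (t x - \<theta>) ^ 2) \<in> poly_fun m (2 * k)"
    using poly_fun_power[OF poly_fun_diff[OF t poly_fun_const[of \<theta>]], of 2]
    by (simp add: mult.commute)
  ultimately show ?thesis
    unfolding var_def t_def[symmetric] inner_L2_def
    by (simp add: integral_sample shift power2_eq_square)
qed

lemma leave_one_out_average:
  assumes "q \<in> resid_poly n k" "1 \<le> n" "1 \<le> k"
  obtains r where "r \<in> resid_poly (Suc n) k"
    "\<And>x. (\<Sum>i<Suc n. pitman n q (\<lambda>j. x (skip i j))) / real (Suc n) = xbar (Suc n) x - r x"
proof -
  obtain P where P: "P \<in> poly_fun n k" "q = (\<lambda>x. P (\<lambda>i. x i - xbar n x))"
    using assms(1) unfolding resid_poly_def by blast
  \<comment> \<open>In terms of the residuals z of the full sample, the residuals of the i-th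
    leave-one-out subsample are z (skip i j) + z i / n.\<close>
  define G where "G i z = (1 / real n) * z i + P (\<lambda>j. z (skip i j) + (1 / real n) * z i)" for i z
  define R where "R z = (1 / real (Suc n)) * (\<Sum>i<Suc n. G i z)" for z
  have "R \<in> poly_fun (Suc n) k"
    unfolding R_def[abs_def] G_def[abs_def] using assms(3)
    by (intro poly_fun_scale poly_fun_sum poly_fun_add poly_fun_coord
        poly_fun_compose_linear[OF P(1)])
      (auto intro: skip_less)
  then have "(\<lambda>x. R (\<lambda>l. x l - xbar (Suc n) x)) \<in> resid_poly (Suc n) k"
    unfolding resid_poly_def by blast
  moreover have pointwise:
    "pitman n q (\<lambda>j. x (skip i j)) = xbar (Suc n) x - G i (\<lambda>l. x l - xbar (Suc n) x)"
    if "i < Suc n" for x i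
    unfolding pitman_def P(2) G_def xbar_skip[OF assms(2) that] by (simp add: algebra_simps)
  have "(\<Sum>i<Suc n. pitman n q (\<lambda>j. x (skip i j))) =
      real (Suc n) * xbar (Suc n) x - (\<Sum>i<Suc n. G i (\<lambda>l. x l - xbar (Suc n) x))" for x
    by (simp add: pointwise sum_subtractf)
  then have "(\<Sum>i<Suc n. pitman n q (\<lambda>j. x (skip i j))) / real (Suc n) =
      xbar (Suc n) x - R (\<lambda>l. x l - xbar (Suc n) x)" for x
    by (simp add: R_def diff_divide_distrib)
  ultimately show thesis by (rule that)
qed

lemma inner_L2_leave_one_out_le:
  assumes "1 \<le> n" "1 \<le> k" "t \<in> poly_fun n k" "integral\<^sup>L (Pi_F n) t = 0"
  defines "Z \<equiv> \<lambda>x. \<Sum>i<Suc n. t (\<lambda>j. x (skip i j))"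
  shows "inner_L2 (Suc n) Z Z \<le> real (Suc n) * (real n * inner_L2 n t t)"
proof -
  define Y where "Y i x = t (\<lambda>j. x (skip i j))" for i x
  have Y: "Y i \<in> poly_fun (Suc n) k" if "i < Suc n" for i
    unfolding Y_def[abs_def] using assms(2)
    by (intro poly_fun_compose_linear[OF assms(3)] poly_fun_coord skip_less) auto
  have "integrate_out i (Y i) = Y i" for i
    by (rule integrate_out_eq_self) (simp add: Y_def skip_neq)
  moreover have "integral\<^sup>L (Pi_F (Suc n)) (Y i) = 0" for i
    using integral_skip[OF poly_fun_double_degree[OF assms(3)], of i] assms(4)
    by (simp add: Y_def[abs_def])
  moreover have "inner_L2 (Suc n) (Y i) (Y i) = inner_L2 n t t" for i
    using integral_skip[of "\<lambda>x. t x * t x" n i] poly_fun_mult[OF assms(3,3)]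
    by (simp add: inner_L2_def Y_def mult_2)
  ultimately show ?thesis
    using inner_L2_sum_le[of "Suc n" Y] Y assms(1) by (simp add: Y_def Z_def ac_simps)
qed

end

theorem mainTheorem11:
  fixes F :: "real measure" and k n :: nat and \<theta> :: real
    and q q' :: "(nat \<Rightarrow> real) \<Rightarrow> real"
  assumes "real_distribution F"
    and "k \<ge> 1"
    and "integrable F (\<lambda>x. x ^ (2 * k))"
    and "n \<ge> 1"
    and "is_proj n k F q"
    and "is_proj (Suc n) k F q'"
  shows "real (n + 1) * var (sample (Suc n) F \<theta>) (pitman (Suc n) q')
           \<le> real n * var (sample n F \<theta>) (pitman n q)"
proof -
  interpret finite_moments F k
    using assms(1,3) by (intro finite_moments.intro finite_moments_axioms.intro)
  define N where "N = real (Suc n)"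
  define t where "t = pitman n q"
  define Z where "Z x = (\<Sum>i<Suc n. t (\<lambda>j. x (skip i j)))" for x
  obtain r where r: "r \<in> resid_poly (Suc n) k"
    and average: "\<And>x. Z x / N = xbar (Suc n) x - r x"
    using leave_one_out_average assms(2,4,5) unfolding Z_def t_def N_def is_proj_iff by metis
  have "(\<lambda>x. xbar (Suc n) x - r x) = (\<lambda>x. (1 / N) * Z x)"
    using average by (simp add: fun_eq_iff)
  moreover have
    "inner_L2 (Suc n) (\<lambda>x. (1 / N) * Z x) (\<lambda>x. (1 / N) * Z x) = inner_L2 (Suc n) Z Z / N\<^sup>2"
    unfolding inner_L2_scale_left inner_L2_scale_right by (simp add: power2_eq_square)
  ultimately have
    "inner_L2 (Suc n) (pitman (Suc n) q') (pitman (Suc n) q') \<le> inner_L2 (Suc n) Z Z / N\<^sup>2"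
    using pitman_optimal[OF assms(6,2) r] by simp
  also have "\<dots> \<le> N * (real n * inner_L2 n t t) / N\<^sup>2"
    using inner_L2_leave_one_out_le[OF assms(4,2) pitman_poly_fun[OF assms(5,2)]
        integral_pitman[OF assms(5)]]
    unfolding Z_def[abs_def] t_def N_def by (simp add: divide_right_mono)
  also have "\<dots> = real n * inner_L2 n t t / N"
    by (simp add: N_def power2_eq_square)
  finally have
    "N * inner_L2 (Suc n) (pitman (Suc n) q') (pitman (Suc n) q') \<le> real n * inner_L2 n t t"
    by (simp add: N_def pos_le_divide_eq mult.commute)
  then show ?thesis
    using var_pitman[OF assms(6,2)] var_pitman[OF assms(5,2,4)] by (simp add: t_def N_def)
qed

end
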